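(* Suppose that for every integer $\ell \ge 4$, $\pi(K^3_\ell) = 1-\left(\frac{2}{\ell-1}\right)^2$ (Turán's conjecture). Then the stability number of $K_4^3$ is infinite, i.e. $\xi(K_4^3)=\infty$.
   Context: $K^3_\ell$ is the complete $3$-graph on $\ell$ vertices. For a family $\mathcal{F}$ of $r$-graphs ($r$-uniform hypergraphs), $\mathcal{F}$-free means containing no member of $\mathcal{F}$ as a subgraph, $\mathrm{ex}(n,\mathcal{F})$ is the maximum number of edges of an $\mathcal{F}$-free $r$-graph on $n$ vertices, and $\pi(\mathcal{F})=\lim_{n\to\infty}\mathrm{ex}(n,\mathcal{F})/\binom{n}{r}$. $t$-stable: for integers $r\ge2$, $t\ge1$, a family $\mathcal{F}$ of $r$-graphs is $t$-stable if there exist $m_0$ and, for every $m\ge m_0$, $r$-graphs $\mathcal{H}^1_m,\dots,\mathcal{H}^t_m$ on $m$ vertices such that: for every $\delta>0$ there exist $\epsilon>0$ and $n_0$ such that for all $n\ge n_0$, every $\mathcal{F}$-free $r$-graph $\mathcal{H}$ on $n$ vertices with $|\mathcal{H}|>(1-\epsilon)\mathrm{ex}(n,\mathcal{F})$ can be transformed into (an isomorphic copy of) some $\mathcal{H}^i_n$ by adding and removing at most $\delta|\mathcal{H}|$ edges. The stability number $\xi(\mathcal{F})$ is the minimum $t$ such that $\mathcal{F}$ is $t$-stable, and $\xi(\mathcal{F})=\infty$ if no such $t$ exists. *)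

theory Defs
  imports Complex_Main "HOL-Library.Extended_Nat"
begin

text \<open>A (labelled) r-graph F on k vertices is represented by the pair (k, F).\<close>

definition is_rgraph :: "nat \<Rightarrow> nat \<Rightarrow> nat set set \<Rightarrow> bool" where
  "is_rgraph r n H \<longleftrightarrow> (\<forall>e\<in>H. e \<subseteq> {..<n} \<and> card e = r)"

definition contains_copy :: "nat \<Rightarrow> nat set set \<Rightarrow> nat \<Rightarrow> nat set set \<Rightarrow> bool" where
  "contains_copy n H k F \<longleftrightarrow>
     (\<exists>f. inj_on f {..<k} \<and> f ` {..<k} \<subseteq> {..<n} \<and> (\<forall>e\<in>F. f ` e \<in> H))"

definition family_free :: "(nat \<times> nat set set) set \<Rightarrow> nat \<Rightarrow> nat set set \<Rightarrow> bool" where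
  "family_free \<F> n H \<longleftrightarrow> (\<forall>(k, F)\<in>\<F>. \<not> contains_copy n H k F)"

definition ex_num :: "nat \<Rightarrow> (nat \<times> nat set set) set \<Rightarrow> nat \<Rightarrow> nat" where
  "ex_num r \<F> n = Max {card H | H. is_rgraph r n H \<and> family_free \<F> n H}"

definition turan_density :: "nat \<Rightarrow> (nat \<times> nat set set) set \<Rightarrow> real" where
  "turan_density r \<F> = lim (\<lambda>n. real (ex_num r \<F> n) / real (n choose r))"

definition K3 :: "nat \<Rightarrow> nat \<times> nat set set" where
  "K3 l = (l, {e. e \<subseteq> {..<l} \<and> card e = 3})"

text \<open>Hs m i is the r-graph H^i_m on m vertices (i = 1..t).
  "Transformed into an isomorphic copy of H^i_n by adding and removing at most
  delta |H| edges": some permutation sigma of the vertices with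
  |H symmetric-difference sigma(H^i_n)| <= delta |H|.\<close>
definition t_stable :: "nat \<Rightarrow> (nat \<times> nat set set) set \<Rightarrow> nat \<Rightarrow> bool" where
  "t_stable r \<F> t \<longleftrightarrow>
     (\<exists>m0 (Hs :: nat \<Rightarrow> nat \<Rightarrow> nat set set).
        (\<forall>m\<ge>m0. \<forall>i\<in>{1..t}. is_rgraph r m (Hs m i)) \<and>
        (\<forall>\<delta>::real. \<delta> > 0 \<longrightarrow> (\<exists>\<epsilon>::real. \<epsilon> > 0 \<and> (\<exists>n0::nat. \<forall>n\<ge>n0. \<forall>H.
            is_rgraph r n H \<and> family_free \<F> n H \<and>
            real (card H) > (1 - \<epsilon>) * real (ex_num r \<F> n) \<longrightarrow>
            (\<exists>i\<in>{1..t}. \<exists>\<sigma>. bij_betw \<sigma> {..<n} {..<n} \<and>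
               real (card ((H - (image \<sigma>) ` Hs n i) \<union> ((image \<sigma>) ` Hs n i - H)))
                 \<le> \<delta> * real (card H))))))"

definition stability_number :: "nat \<Rightarrow> (nat \<times> nat set set) set \<Rightarrow> enat" where
  "stability_number r \<F> =
     (if \<exists>t\<ge>1. t_stable r \<F> t then enat (LEAST t. t \<ge> 1 \<and> t_stable r \<F> t) else \<infinity>)"

end

theory Submission
  imports Defs "HOL-Combinatorics.Transposition" "HOL-Library.Multiset"
begin

text \<open>Deleting a vertex shows that \<open>ex(n, K\<^sub>4\<^sup>3) / binom(n, 3)\<close> decreases, so under Turan's
  conjecture it tends to \<open>5/9\<close>. Blow-ups of a fixed six-part pattern with part sizes
  \<open>k, k, k, m - k, m - k, m - k\<close> are \<open>K\<^sub>4\<^sup>3\<close>-free and have \<open>5/9 binom(3m, 3) - O(m\<^sup>2)\<close> edges for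
  every \<open>k \<le> m\<close>, so all of them are near-extremal. Their sums of squared codegrees,
  \<open>27 m\<^sup>4 - 12 k\<^sup>2 (m - k)\<^sup>2 + O(m\<^sup>3)\<close>, are invariant under relabelling and move by \<open>O(n)\<close> per
  edited edge. Taking \<open>k = j m / (2 (t + 1))\<close> for \<open>j = 0, \<dots>, t\<close> gives \<open>t + 1\<close> near-extremal
  graphs whose invariants are pairwise \<open>\<Omega>(m\<^sup>4)\<close> apart, and by pigeonhole one of them is far
  from each of \<open>t\<close> given templates.\<close>

section \<open>Turan numbers and densities\<close>

lemma is_rgraph_subset_Pow: "is_rgraph r n H \<Longrightarrow> H \<subseteq> Pow {..<n}"
  by (auto simp: is_rgraph_def)

lemma is_rgraph_finite: "is_rgraph r n H \<Longrightarrow> finite H"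
  using finite_subset[OF is_rgraph_subset_Pow] by blast

lemma finite_free_rgraph_sizes: "finite {card H |H. is_rgraph r n H \<and> family_free \<F> n H}"
proof -
  have "{card H |H. is_rgraph r n H \<and> family_free \<F> n H} \<subseteq> card ` Pow (Pow {..<n})"
    using is_rgraph_subset_Pow by blast
  then show ?thesis
    by (rule finite_subset) simp
qed

lemma card_le_ex_num:
  assumes "is_rgraph r n H" "family_free \<F> n H"
  shows "card H \<le> ex_num r \<F> n"
  unfolding ex_num_def using finite_free_rgraph_sizes by (rule Max_ge) (use assms in blast)

lemma family_free_empty:
  assumes "\<forall>(k, F) \<in> \<F>. F \<noteq> {}"
  shows "family_free \<F> n {}"
  using assms by (fastforce simp: family_free_def contains_copy_def)

lemma ex_num_attained:
  assumes "\<forall>(k, F) \<in> \<F>. F \<noteq> {}"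
  obtains H where "is_rgraph r n H" "family_free \<F> n H" "card H = ex_num r \<F> n"
proof -
  have "{card H |H. is_rgraph r n H \<and> family_free \<F> n H} \<noteq> {}"
    using family_free_empty[OF assms] by (auto simp: is_rgraph_def)
  then have "ex_num r \<F> n \<in> {card H |H. is_rgraph r n H \<and> family_free \<F> n H}"
    unfolding ex_num_def using finite_free_rgraph_sizes by (intro Max_in)
  then obtain H where "ex_num r \<F> n = card H" "is_rgraph r n H" "family_free \<F> n H"
    by blast
  then show ?thesis
    using that by simp
qed

lemma contains_copy_embedding:
  assumes "contains_copy n H k F" "inj_on g {..<n}" "g ` {..<n} \<subseteq> {..<n'}"
    and "\<And>e. e \<in> H \<Longrightarrow> g ` e \<in> H'"
  shows "contains_copy n' H' k F"
proof -
  obtain f where f: "inj_on f {..<k}" "f ` {..<k} \<subseteq> {..<n}" "\<forall>e\<in>F. f ` e \<in> H"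
    using assms(1) by (auto simp: contains_copy_def)
  have "inj_on (g \<circ> f) {..<k}"
    using f(1,2) assms(2) by (simp add: comp_inj_on inj_on_subset)
  moreover have "(g \<circ> f) ` {..<k} \<subseteq> {..<n'}"
    using f(2) assms(3) by (auto simp: image_comp[symmetric])
  moreover have "\<forall>e\<in>F. (g \<circ> f) ` e \<in> H'"
    using f(3) assms(4) by (metis image_comp)
  ultimately show ?thesis
    unfolding contains_copy_def by blast
qed

lemma family_free_embedding:
  assumes "family_free \<F> n' H'" "inj_on g {..<n}" "g ` {..<n} \<subseteq> {..<n'}"
    and "\<And>e. e \<in> H \<Longrightarrow> g ` e \<in> H'"
  shows "family_free \<F> n H"
  unfolding family_free_def
proof (intro ballI, clarify)
  fix k F assume "(k, F) \<in> \<F>" "contains_copy n H k F"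
  have "contains_copy n' H' k F"
    using \<open>contains_copy n H k F\<close> assms(2-4) by (rule contains_copy_embedding)
  then show False
    using assms(1) \<open>(k, F) \<in> \<F>\<close> by (auto simp: family_free_def)
qed

lemma card_edges_avoiding_le_ex_num:
  assumes H: "is_rgraph r (Suc n) H" "family_free \<F> (Suc n) H" and "v \<le> n"
  shows "card {e \<in> H. v \<notin> e} \<le> ex_num r \<F> n"
proof -
  let ?\<tau> = "Transposition.transpose v n"
  let ?H' = "image ?\<tau> ` {e \<in> H. v \<notin> e}"
  have "is_rgraph r n ?H'"
  proof (unfold is_rgraph_def, intro ballI conjI)
    fix e' assume "e' \<in> ?H'"
    then obtain e where e: "e \<in> H" "v \<notin> e" "e' = ?\<tau> ` e" by blast
    then have "e \<subseteq> {..<Suc n}" "card e = r"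
      using H(1) by (auto simp: is_rgraph_def)
    moreover have "card (?\<tau> ` e) = card e"
      by (rule card_image) (simp add: inj_on_subset[OF inj_transpose])
    ultimately show "e' \<subseteq> {..<n}" "card e' = r"
      using e \<open>v \<le> n\<close> by (auto simp: transpose_def)
  qed
  moreover have "family_free \<F> n ?H'"
  proof (rule family_free_embedding[OF H(2)])
    show "inj_on ?\<tau> {..<n}"
      by (simp add: inj_on_subset[OF inj_transpose])
    show "?\<tau> ` {..<n} \<subseteq> {..<Suc n}"
      using \<open>v \<le> n\<close> by (auto simp: transpose_def)
    show "?\<tau> ` e \<in> H" if "e \<in> ?H'" for e
      using that by (auto simp: image_image)
  qed
  ultimately have "card ?H' \<le> ex_num r \<F> n"
    by (rule card_le_ex_num)
  moreover have "card ?H' = card {e \<in> H. v \<notin> e}"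
    by (rule card_image) (meson inj_image_eq_iff inj_onI inj_transpose)
  ultimately show ?thesis
    by simp
qed

lemma sum_card_edges_avoiding:
  assumes "is_rgraph r (Suc n) H"
  shows "(\<Sum>v\<le>n. card {e \<in> H. v \<notin> e}) = (Suc n - r) * card H"
proof -
  have "card {e \<in> H. v \<notin> e} = (\<Sum>e\<in>H. of_bool (v \<notin> e))" for v
    using is_rgraph_finite[OF assms] by (simp add: Int_def)
  then have "(\<Sum>v\<le>n. card {e \<in> H. v \<notin> e}) = (\<Sum>v\<le>n. \<Sum>e\<in>H. of_bool (v \<notin> e))"
    by simp
  also have "\<dots> = (\<Sum>e\<in>H. \<Sum>v\<le>n. of_bool (v \<notin> e))"
    by (rule sum.swap)
  also have "\<dots> = (\<Sum>e\<in>H. Suc n - r)"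
  proof (rule sum.cong[OF refl])
    fix e assume "e \<in> H"
    then have "e \<subseteq> {..n}" "card e = r"
      using assms by (auto simp: is_rgraph_def lessThan_Suc_atMost)
    then have "card ({..n} - e) = Suc n - r"
      by (simp add: card_Diff_subset finite_subset)
    then show "(\<Sum>v\<le>n. of_bool (v \<notin> e)) = Suc n - r"
      by (simp add: Diff_eq Compl_eq)
  qed
  finally show ?thesis
    by simp
qed

lemma ex_num_Suc_le:
  assumes "\<forall>(k, F) \<in> \<F>. F \<noteq> {}"
  shows "(Suc n - r) * ex_num r \<F> (Suc n) \<le> Suc n * ex_num r \<F> n"
proof -
  obtain H where H: "is_rgraph r (Suc n) H" "family_free \<F> (Suc n) H"
    and card_H: "card H = ex_num r \<F> (Suc n)"
    using ex_num_attained[OF assms] .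
  have "(Suc n - r) * ex_num r \<F> (Suc n) = (\<Sum>v\<le>n. card {e \<in> H. v \<notin> e})"
    using sum_card_edges_avoiding[OF H(1)] card_H by simp
  also have "\<dots> \<le> (\<Sum>v\<le>n. ex_num r \<F> n)"
    by (rule sum_mono) (simp add: card_edges_avoiding_le_ex_num[OF H])
  finally show ?thesis
    by simp
qed

definition ex_density :: "nat \<Rightarrow> (nat \<times> nat set set) set \<Rightarrow> nat \<Rightarrow> real" where
  "ex_density r \<F> n = real (ex_num r \<F> n) / real (n choose r)"

lemma ex_density_Suc_le:
  assumes "\<forall>(k, F) \<in> \<F>. F \<noteq> {}" "r \<le> n"
  shows "ex_density r \<F> (Suc n) \<le> ex_density r \<F> n"
proof -
  have "(Suc n - r) * (Suc n choose r) = Suc n * (n choose r)"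
    using binomial_absorb_comp[of "Suc n" r] by simp
  then have binom: "real (Suc n - r) * real (Suc n choose r) = real (Suc n) * real (n choose r)"
    by (metis of_nat_mult)
  have step: "real (Suc n - r) * ex_num r \<F> (Suc n) \<le> real (Suc n) * ex_num r \<F> n"
    using ex_num_Suc_le[OF assms(1), of n r] by (metis of_nat_le_iff of_nat_mult)
  have pos: "real (n choose r) > 0" "real (Suc n choose r) > 0" "real (Suc n - r) > 0"
    using assms(2) by auto
  have "real (Suc n - r) * (ex_num r \<F> (Suc n) * real (n choose r))
      \<le> real (Suc n) * ex_num r \<F> n * real (n choose r)"
    using mult_right_mono[OF step, of "real (n choose r)"] by (simp add: ac_simps)
  also have "\<dots> = ex_num r \<F> n * (real (Suc n) * real (n choose r))"
    by (simp only: ac_simps)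
  also have "\<dots> = real (Suc n - r) * (ex_num r \<F> n * real (Suc n choose r))"
    by (simp only: binom[symmetric] ac_simps)
  finally show ?thesis
    using pos by (simp add: ex_density_def divide_simps ac_simps)
qed

lemma ex_density_tendsto:
  assumes "\<forall>(k, F) \<in> \<F>. F \<noteq> {}"
  shows "ex_density r \<F> \<longlonglongrightarrow> turan_density r \<F>"
proof -
  have "decseq (\<lambda>i. ex_density r \<F> (i + r))"
    by (rule decseq_SucI) (simp add: ex_density_Suc_le[OF assms])
  moreover have "0 \<le> ex_density r \<F> (i + r)" for i
    by (simp add: ex_density_def)
  ultimately obtain L where "(\<lambda>i. ex_density r \<F> (i + r)) \<longlonglongrightarrow> L"
    using decseq_convergent by blast
  then have "ex_density r \<F> \<longlonglongrightarrow> L"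
    by (rule LIMSEQ_offset)
  moreover have "turan_density r \<F> = lim (ex_density r \<F>)"
    by (simp add: turan_density_def ex_density_def[abs_def])
  ultimately show ?thesis
    using limI by metis
qed

section \<open>Codegree statistics of 3-graphs\<close>

definition triple_count :: "nat set set \<Rightarrow> nat \<Rightarrow> real" where
  "triple_count G n = (\<Sum>x<n. \<Sum>y<n. \<Sum>z<n. of_bool ({x, y, z} \<in> G))"

text \<open>In a 3-graph the inner sum is the codegree of \<open>x\<close> and \<open>y\<close>, and it vanishes for \<open>x = y\<close>.\<close>

definition codegree_square_sum :: "nat set set \<Rightarrow> nat \<Rightarrow> real" where
  "codegree_square_sum G n = (\<Sum>x<n. \<Sum>y<n. (\<Sum>z<n. of_bool ({x, y, z} \<in> G))\<^sup>2)"

lemma triple_eq_cases: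
  assumes "{x, y, z} = {a, b, c}" "distinct [a, b, c]"
  shows "(x, y, z) \<in> {(a, b, c), (a, c, b), (b, a, c), (b, c, a), (c, a, b), (c, b, a)}"
proof -
  have "card {x, y, z} = 3"
    using assms by simp
  then have "distinct [x, y, z]"
    by (auto simp: card_insert_if split: if_splits)
  moreover have "x \<in> {a, b, c}" "y \<in> {a, b, c}" "z \<in> {a, b, c}"
    using assms(1) by auto
  ultimately show ?thesis
    by auto
qed

lemma card_triples_spanning:
  assumes "card e = 3"
  shows "card {(x, y, z). {x, y, z} = e} = 6"
proof -
  obtain a b c where e: "e = {a, b, c}" "distinct [a, b, c]"
    using assms by (auto simp: card_3_iff)
  let ?S = "{(a, b, c), (a, c, b), (b, a, c), (b, c, a), (c, a, b), (c, b, a)}"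
  have "{(x, y, z). {x, y, z} = e} = ?S"
  proof (rule subset_antisym)
    show "{(x, y, z). {x, y, z} = e} \<subseteq> ?S"
    proof (rule subsetI)
      fix p assume "p \<in> {(x, y, z). {x, y, z} = e}"
      then obtain x y z where "p = (x, y, z)" "{x, y, z} = {a, b, c}"
        using e(1) by auto
      then show "p \<in> ?S"
        using triple_eq_cases[OF _ e(2)] by simp
    qed
  qed (auto simp: e insert_commute)
  then show ?thesis
    using e(2) by simp
qed

lemma sum3_of_bool:
  fixes n :: nat
  shows "(\<Sum>x<n. \<Sum>y<n. \<Sum>z<n. of_bool (P x y z)) = real (card {(x, y, z). x < n \<and> y < n \<and> z < n \<and> P x y z})"
proof -
  have "(\<Sum>x<n. \<Sum>y<n. \<Sum>z<n. of_bool (P x y z))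
      = (\<Sum>p \<in> {..<n} \<times> {..<n} \<times> {..<n}. (of_bool (P (fst p) (fst (snd p)) (snd (snd p))) :: real))"
    by (simp only: sum.cartesian_product split_def)
  also have "\<dots> = real (card ({..<n} \<times> {..<n} \<times> {..<n} \<inter> {p. P (fst p) (fst (snd p)) (snd (snd p))}))"
    by (intro sum_of_bool_eq finite_cartesian_product) auto
  also have "{..<n} \<times> {..<n} \<times> {..<n} \<inter> {p. P (fst p) (fst (snd p)) (snd (snd p))}
      = {(x, y, z). x < n \<and> y < n \<and> z < n \<and> P x y z}"
    by auto
  finally show ?thesis .
qed

lemma triple_count_eq:
  assumes "is_rgraph 3 n G"
  shows "triple_count G n = 6 * real (card G)"
proof -
  have six: "card {(x, y, z). {x, y, z} = e} = 6" if "e \<in> G" for e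
    using that assms card_triples_spanning by (auto simp: is_rgraph_def)
  then have finite: "finite {(x, y, z). {x, y, z} = e}" if "e \<in> G" for e
    using that card.infinite by fastforce
  have "triple_count G n = real (card {(x, y, z). x < n \<and> y < n \<and> z < n \<and> {x, y, z} \<in> G})"
    unfolding triple_count_def by (rule sum3_of_bool)
  also have "{(x, y, z). x < n \<and> y < n \<and> z < n \<and> {x, y, z} \<in> G} = (\<Union>e\<in>G. {(x, y, z). {x, y, z} = e})"
    using assms by (auto simp: is_rgraph_def)
  also have "card \<dots> = (\<Sum>e\<in>G. card {(x, y, z). {x, y, z} = e})"
    using finite is_rgraph_finite[OF assms] by (intro card_UN_disjoint) auto
  also have "\<dots> = 6 * card G"
    using six by simp
  finally show ?thesis
    by simp
qed

lemma triple_count_le: "triple_count G n \<le> real n ^ 3"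
proof -
  have "triple_count G n \<le> (\<Sum>x<n. \<Sum>y<n. \<Sum>z<n. 1)"
    unfolding triple_count_def by (intro sum_mono) simp
  then show ?thesis
    by (simp add: power3_eq_cube)
qed

lemma card_le_cube_div_6:
  assumes "is_rgraph 3 n G"
  shows "real (card G) \<le> real n ^ 3 / 6"
  using triple_count_eq[OF assms] triple_count_le[of G n] by simp

lemma choose_3_le_cube_div_6: "real (n choose 3) \<le> real n ^ 3 / 6"
proof -
  have "real (card {e. e \<subseteq> {..<n} \<and> card e = 3}) \<le> real n ^ 3 / 6"
    by (rule card_le_cube_div_6) (simp add: is_rgraph_def)
  moreover have "card {e. e \<subseteq> {..<n} \<and> card e = 3} = n choose 3"
    using n_subsets[of "{..<n}" 3] by simp
  ultimately show ?thesis
    by simp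
qed

lemma codegree_square_sum_relabel:
  assumes \<sigma>: "bij_betw \<sigma> {..<n} {..<n}" and H: "is_rgraph 3 n H"
  shows "codegree_square_sum (image \<sigma> ` H) n = codegree_square_sum H n"
proof -
  let ?g = "\<lambda>x y z. of_bool ({x, y, z} \<in> image \<sigma> ` H) :: real"
  have reindex: "(\<Sum>x<n. f (\<sigma> x)) = (\<Sum>x<n. f x)" for f :: "nat \<Rightarrow> real"
    by (rule sum.reindex_bij_betw[OF \<sigma>])
  have mem: "{\<sigma> x, \<sigma> y, \<sigma> z} \<in> image \<sigma> ` H \<longleftrightarrow> {x, y, z} \<in> H" if "x < n" "y < n" "z < n" for x y z
  proof -
    have "inj_on (image \<sigma>) (Pow {..<n})"
      using \<sigma> by (simp add: bij_betw_def inj_on_image_Pow)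
    then have "\<sigma> ` {x, y, z} \<in> image \<sigma> ` H \<longleftrightarrow> {x, y, z} \<in> H"
      by (rule inj_on_image_mem_iff) (use that is_rgraph_subset_Pow[OF H] in auto)
    then show ?thesis
      by simp
  qed
  have inner: "(\<Sum>z<n. ?g a b (\<sigma> z)) = (\<Sum>z<n. ?g a b z)" for a b
    using reindex[of "?g a b"] .
  have middle: "(\<Sum>y<n. (\<Sum>z<n. ?g a (\<sigma> y) z)\<^sup>2) = (\<Sum>y<n. (\<Sum>z<n. ?g a y z)\<^sup>2)" for a
    using reindex[of "\<lambda>y. (\<Sum>z<n. ?g a y z)\<^sup>2"] .
  have outer: "(\<Sum>x<n. \<Sum>y<n. (\<Sum>z<n. ?g (\<sigma> x) y z)\<^sup>2) = (\<Sum>x<n. \<Sum>y<n. (\<Sum>z<n. ?g x y z)\<^sup>2)"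
    using reindex[of "\<lambda>x. \<Sum>y<n. (\<Sum>z<n. ?g x y z)\<^sup>2"] .
  have "codegree_square_sum (image \<sigma> ` H) n = (\<Sum>x<n. \<Sum>y<n. (\<Sum>z<n. ?g (\<sigma> x) (\<sigma> y) (\<sigma> z))\<^sup>2)"
    unfolding codegree_square_sum_def by (simp only: inner middle outer)
  also have "\<dots> = codegree_square_sum H n"
    unfolding codegree_square_sum_def by (intro sum.cong refl) (simp add: mem)
  finally show ?thesis .
qed

lemma sum_of_bool_le: "(\<Sum>z<n. of_bool (P z) :: real) \<le> real n"
  using sum_mono[of "{..<n}" "\<lambda>z. of_bool (P z) :: real" "\<lambda>_. 1"] by simp

lemma abs_diff_squares_le:
  fixes a b c d :: real
  assumes "\<bar>a - b\<bar> \<le> d" "0 \<le> a" "a \<le> c" "0 \<le> b" "b \<le> c"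
  shows "\<bar>a\<^sup>2 - b\<^sup>2\<bar> \<le> 2 * c * d"
proof -
  have "a\<^sup>2 - b\<^sup>2 = (a - b) * (a + b)"
    by (simp add: power2_eq_square algebra_simps)
  then have "\<bar>a\<^sup>2 - b\<^sup>2\<bar> = \<bar>a - b\<bar> * (a + b)"
    using assms(2,4) by (simp add: abs_mult)
  also have "\<dots> \<le> d * (2 * c)"
    using assms by (intro mult_mono) auto
  finally show ?thesis
    by (simp add: ac_simps)
qed

lemma codegree_square_sum_diff_le:
  "\<bar>codegree_square_sum G n - codegree_square_sum K n\<bar>
     \<le> 2 * real n * triple_count ((G - K) \<union> (K - G)) n"
proof -
  let ?deg = "\<lambda>G x y. \<Sum>z<n. (of_bool ({x, y, z} \<in> G) :: real)"
  let ?D = "(G - K) \<union> (K - G)"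
  have "\<bar>?deg G x y - ?deg K x y\<bar> \<le> ?deg ?D x y" for x y
  proof -
    have "\<bar>?deg G x y - ?deg K x y\<bar> = \<bar>\<Sum>z<n. of_bool ({x, y, z} \<in> G) - of_bool ({x, y, z} \<in> K)\<bar>"
      by (simp add: sum_subtractf)
    also have "\<dots> \<le> (\<Sum>z<n. \<bar>of_bool ({x, y, z} \<in> G) - of_bool ({x, y, z} \<in> K)\<bar>)"
      by (rule sum_abs)
    also have "\<dots> = ?deg ?D x y"
      by (intro sum.cong) auto
    finally show ?thesis .
  qed
  then have pair: "\<bar>(?deg G x y)\<^sup>2 - (?deg K x y)\<^sup>2\<bar> \<le> 2 * real n * ?deg ?D x y" for x y
    by (intro abs_diff_squares_le sum_of_bool_le sum_nonneg) auto
  have "\<bar>codegree_square_sum G n - codegree_square_sum K n\<bar>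
      = \<bar>\<Sum>x<n. \<Sum>y<n. (?deg G x y)\<^sup>2 - (?deg K x y)\<^sup>2\<bar>"
    by (simp add: codegree_square_sum_def sum_subtractf)
  also have "\<dots> \<le> (\<Sum>x<n. \<Sum>y<n. \<bar>(?deg G x y)\<^sup>2 - (?deg K x y)\<^sup>2\<bar>)"
    by (rule order_trans[OF sum_abs], rule sum_mono, rule sum_abs)
  also have "\<dots> \<le> (\<Sum>x<n. \<Sum>y<n. 2 * real n * ?deg ?D x y)"
    by (intro sum_mono pair)
  also have "\<dots> = 2 * real n * triple_count ?D n"
    by (simp add: triple_count_def sum_distrib_left)
  finally show ?thesis .
qed

section \<open>Blow-ups of patterns\<close>

definition blowup :: "(nat \<Rightarrow> nat \<Rightarrow> nat \<Rightarrow> bool) \<Rightarrow> (nat \<Rightarrow> nat) \<Rightarrow> nat \<Rightarrow> nat set set" where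
  "blowup P lab n =
     {{x, y, z} |x y z. x < n \<and> y < n \<and> z < n \<and> distinct [x, y, z] \<and> P (lab x) (lab y) (lab z)}"

definition symmetric_pattern :: "(nat \<Rightarrow> nat \<Rightarrow> nat \<Rightarrow> bool) \<Rightarrow> bool" where
  "symmetric_pattern P \<longleftrightarrow> (\<forall>p q r. P p q r = P q p r \<and> P p q r = P p r q)"

lemma mem_blowup:
  assumes "symmetric_pattern P" "x < n" "y < n" "z < n"
  shows "{x, y, z} \<in> blowup P lab n \<longleftrightarrow> distinct [x, y, z] \<and> P (lab x) (lab y) (lab z)"
proof
  assume "{x, y, z} \<in> blowup P lab n"
  then obtain a b c where abc: "{x, y, z} = {a, b, c}" "distinct [a, b, c]" "P (lab a) (lab b) (lab c)"
    unfolding blowup_def by blast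
  have swap: "P p q r \<Longrightarrow> P q p r" "P p q r \<Longrightarrow> P p r q" for p q r
    using assms(1) unfolding symmetric_pattern_def by blast+
  from triple_eq_cases[OF abc(1,2)] show "distinct [x, y, z] \<and> P (lab x) (lab y) (lab z)"
    using abc(2,3) by (auto intro: swap)
next
  assume "distinct [x, y, z] \<and> P (lab x) (lab y) (lab z)"
  then show "{x, y, z} \<in> blowup P lab n"
    using assms(2-4) unfolding blowup_def by blast
qed

lemma blowup_rgraph: "is_rgraph 3 n (blowup P lab n)"
  by (auto simp: is_rgraph_def blowup_def)

lemma blowup_K4_free:
  assumes "symmetric_pattern P" and no_K4: "\<And>p q r u. \<not> (P p q r \<and> P p q u \<and> P p r u \<and> P q r u)"
  shows "family_free {K3 4} n (blowup P lab n)"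
proof -
  have "\<not> contains_copy n (blowup P lab n) 4 {e. e \<subseteq> {..<4} \<and> card e = 3}"
  proof
    assume "contains_copy n (blowup P lab n) 4 {e. e \<subseteq> {..<4} \<and> card e = 3}"
    then obtain f :: "nat \<Rightarrow> nat" where f: "f ` {..<4} \<subseteq> {..<n}"
      and edges: "\<And>e. e \<subseteq> {..<4} \<Longrightarrow> card e = 3 \<Longrightarrow> f ` e \<in> blowup P lab n"
      unfolding contains_copy_def by auto
    have "P (lab (f a)) (lab (f b)) (lab (f c))"
      if "a < 4" "b < 4" "c < 4" "distinct [a, b, c]" for a b c :: nat
    proof -
      have "{f a, f b, f c} \<in> blowup P lab n"
        using edges[of "{a, b, c}"] that by simp
      moreover have "f a < n" "f b < n" "f c < n"
        using f that by auto
      ultimately show ?thesis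
        using mem_blowup[OF assms(1)] by blast
    qed
    then show False
      using no_K4[of "lab (f 0)" "lab (f 1)" "lab (f 2)" "lab (f 3)"] by simp
  qed
  then show ?thesis
    by (simp add: family_free_def K3_def)
qed

lemma codegree_drop_degenerate:
  fixes n x y :: nat and Q :: "nat \<Rightarrow> bool"
  defines "b \<equiv> \<Sum>z<n. (of_bool (Q z) :: real)"
    and "a \<equiv> \<Sum>z<n. (of_bool (distinct [x, y, z] \<and> Q z) :: real)"
  shows "a \<le> b" "b - a \<le> real n * of_bool (x = y) + 2"
proof -
  show "a \<le> b"
    unfolding a_def b_def by (intro sum_mono) auto
  have "b - a = (\<Sum>z<n. of_bool (Q z \<and> \<not> distinct [x, y, z]))"
    unfolding a_def b_def sum_subtractf[symmetric] by (intro sum.cong) auto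
  also have "\<dots> \<le> (\<Sum>z<n. of_bool (x = y) + (of_bool (z = x) + of_bool (z = y)))"
    by (intro sum_mono) auto
  also have "\<dots> \<le> real n * of_bool (x = y) + 2"
    by (simp add: sum.distrib Int_insert_right)
  finally show "b - a \<le> real n * of_bool (x = y) + 2" .
qed

lemma sum_diagonal_plus_2: "(\<Sum>x<n. \<Sum>y<n. real n * of_bool (x = y) + 2) = 3 * real n ^ 2"
  by (simp add: sum.distrib power2_eq_square)

lemma sum3_drop_degenerate:
  fixes n :: nat
  shows "(\<Sum>x<n. \<Sum>y<n. \<Sum>z<n. of_bool (Q x y z)) - 3 * real n ^ 2
    \<le> (\<Sum>x<n. \<Sum>y<n. \<Sum>z<n. of_bool (distinct [x, y, z] \<and> Q x y z))"
proof -
  let ?a = "\<lambda>x y. \<Sum>z<n. (of_bool (distinct [x, y, z] \<and> Q x y z) :: real)"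
  let ?b = "\<lambda>x y. \<Sum>z<n. (of_bool (Q x y z) :: real)"
  have "(\<Sum>x<n. \<Sum>y<n. ?b x y) - (\<Sum>x<n. \<Sum>y<n. ?a x y) = (\<Sum>x<n. \<Sum>y<n. ?b x y - ?a x y)"
    by (simp only: sum_subtractf)
  also have "\<dots> \<le> (\<Sum>x<n. \<Sum>y<n. real n * of_bool (x = y) + 2)"
    by (intro sum_mono codegree_drop_degenerate(2))
  finally show ?thesis
    unfolding sum_diagonal_plus_2 by simp
qed

lemma sum_codegree_square_drop_degenerate:
  fixes n :: nat
  shows "\<bar>(\<Sum>x<n. \<Sum>y<n. (\<Sum>z<n. of_bool (distinct [x, y, z] \<and> Q x y z))\<^sup>2)
      - (\<Sum>x<n. \<Sum>y<n. (\<Sum>z<n. of_bool (Q x y z))\<^sup>2)\<bar> \<le> 6 * real n ^ 3"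
proof -
  let ?a = "\<lambda>x y. \<Sum>z<n. (of_bool (distinct [x, y, z] \<and> Q x y z) :: real)"
  let ?b = "\<lambda>x y. \<Sum>z<n. (of_bool (Q x y z) :: real)"
  have pair: "\<bar>(?a x y)\<^sup>2 - (?b x y)\<^sup>2\<bar> \<le> 2 * real n * (real n * of_bool (x = y) + 2)" for x y
    using codegree_drop_degenerate[where Q = "Q x y"]
    by (intro abs_diff_squares_le sum_of_bool_le sum_nonneg) auto
  have "\<bar>(\<Sum>x<n. \<Sum>y<n. (?a x y)\<^sup>2) - (\<Sum>x<n. \<Sum>y<n. (?b x y)\<^sup>2)\<bar>
      = \<bar>\<Sum>x<n. \<Sum>y<n. (?a x y)\<^sup>2 - (?b x y)\<^sup>2\<bar>"
    by (simp add: sum_subtractf)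
  also have "\<dots> \<le> (\<Sum>x<n. \<Sum>y<n. \<bar>(?a x y)\<^sup>2 - (?b x y)\<^sup>2\<bar>)"
    by (rule order_trans[OF sum_abs], rule sum_mono, rule sum_abs)
  also have "\<dots> \<le> (\<Sum>x<n. \<Sum>y<n. 2 * real n * (real n * of_bool (x = y) + 2))"
    by (intro sum_mono pair)
  also have "\<dots> = 6 * real n ^ 3"
    using sum_diagonal_plus_2[of n] by (simp add: sum_distrib_left[symmetric] power3_eq_cube power2_eq_square)
  finally show ?thesis .
qed

section \<open>A six-part \<open>K\<^sub>4\<^sup>3\<close>-free pattern\<close>

text \<open>The edge types, as sorted lists of parts. Parts 0, 1, 2 get \<open>k\<close> vertices and parts 3, 4, 5
  get \<open>m - k\<close>. For \<open>k = m\<close> (or \<open>k = 0\<close>) only the types inside parts 0, 1, 2 (or 3, 4, 5)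
  survive, and they form Turan's construction.\<close>

definition part_triples :: "nat list list" where
  "part_triples =
     [[0,0,2], [0,0,3], [0,1,1], [0,1,2], [0,1,3], [0,1,5], [0,2,4], [0,2,5], [0,3,4],
      [0,3,5], [0,4,4], [1,1,4], [1,2,2], [1,2,3], [1,2,4], [1,3,4], [1,4,5], [1,5,5],
      [2,2,5], [2,3,3], [2,3,5], [2,4,5], [3,3,4], [3,4,5], [3,5,5], [4,4,5]]"

definition part_pattern :: "nat \<Rightarrow> nat \<Rightarrow> nat \<Rightarrow> bool" where
  "part_pattern p q r \<longleftrightarrow> sort [p, q, r] \<in> set part_triples"

lemma sort3_swap:
  fixes p q r :: "'a::linorder"
  shows "sort [q, p, r] = sort [p, q, r]" "sort [p, r, q] = sort [p, q, r]"
  by (rule sort_key_eq_sort_key; simp add: add_mset_commute)+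

lemma symmetric_part_pattern: "symmetric_pattern part_pattern"
  unfolding symmetric_pattern_def part_pattern_def by (metis sort3_swap)

lemma part_pattern_less_6:
  assumes "part_pattern p q r"
  shows "p < 6" "q < 6" "r < 6"
proof -
  have "\<forall>t \<in> set part_triples. \<forall>i \<in> set t. i < 6"
    by (simp add: part_triples_def)
  then show "p < 6" "q < 6" "r < 6"
    using assms unfolding part_pattern_def by (metis list.set_intros set_sort)+
qed

lemma part_pattern_K4_free: "\<not> (part_pattern p q r \<and> part_pattern p q u \<and> part_pattern p r u \<and> part_pattern q r u)"
proof -
  have check: "\<forall>p\<in>{0,1,2,3,4,5}. \<forall>q\<in>{0,1,2,3,4,5}. \<forall>r\<in>{0,1,2,3,4,5}. \<forall>u\<in>{0,1,2,3,4,5}.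
      \<not> (part_pattern p q r \<and> part_pattern p q u \<and> part_pattern p r u \<and> part_pattern q r u)"
    by code_simp
  show ?thesis
  proof
    assume K4: "part_pattern p q r \<and> part_pattern p q u \<and> part_pattern p r u \<and> part_pattern q r u"
    then have "p < 6" "q < 6" "r < 6" "u < 6"
      using part_pattern_less_6 by blast+
    then have "p \<in> {0,1,2,3,4,5}" "q \<in> {0,1,2,3,4,5}" "r \<in> {0,1,2,3,4,5}" "u \<in> {0,1,2,3,4,5}"
      by auto
    then show False
      using check K4 by blast
  qed
qed

lemma lessThan_6_eq: "{..<6::nat} = {0, 1, 2, 3, 4, 5}"
  by auto

lemma part_pattern_weighted_triples:
  fixes K M :: real
  defines "w p \<equiv> if p < 3 then K else M"
  shows "(\<Sum>p<6. w p * (\<Sum>q<6. w q * (\<Sum>r<6. w r * of_bool (part_pattern p q r)))) = 15 * (K + M) ^ 3"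
  unfolding w_def
  apply (simp add: lessThan_6_eq)
  apply (simp add: part_pattern_def part_triples_def)
  by algebra

lemma part_pattern_weighted_codegrees:
  fixes K M :: real
  defines "w p \<equiv> if p < 3 then K else M"
  shows "(\<Sum>p<6. w p * (\<Sum>q<6. w q * (\<Sum>r<6. w r * of_bool (part_pattern p q r))\<^sup>2))
    = 27 * (K + M) ^ 4 - 12 * K ^ 2 * M ^ 2"
  unfolding w_def
  apply (simp add: lessThan_6_eq)
  apply (simp add: part_pattern_def part_triples_def)
  by algebra

definition part_label :: "nat \<Rightarrow> nat \<Rightarrow> nat \<Rightarrow> nat" where
  "part_label k m x =
     (if x < k then 0 else if x < 2 * k then 1 else if x < 3 * k then 2
      else if x < 2 * k + m then 3 else if x < k + 2 * m then 4 else 5)"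

lemma card_part_label_fiber:
  assumes "k \<le> m" "p < 6"
  shows "card {x \<in> {..<3 * m}. part_label k m x = p} = (if p < 3 then k else m - k)"
proof -
  have "{x \<in> {..<3 * m}. part_label k m x = 0} = {..<k}"
    "{x \<in> {..<3 * m}. part_label k m x = 1} = {k..<2 * k}"
    "{x \<in> {..<3 * m}. part_label k m x = 2} = {2 * k..<3 * k}"
    "{x \<in> {..<3 * m}. part_label k m x = 3} = {3 * k..<2 * k + m}"
    "{x \<in> {..<3 * m}. part_label k m x = 4} = {2 * k + m..<k + 2 * m}"
    "{x \<in> {..<3 * m}. part_label k m x = 5} = {k + 2 * m..<3 * m}"
    using assms(1) by (auto simp: part_label_def)
  moreover have "p \<in> {0, 1, 2, 3, 4, 5}"
    using assms(2) by auto
  ultimately show ?thesis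
    using assms(1) by (elim insertE emptyE) simp_all
qed

lemma sum_part_label:
  assumes "k \<le> m"
  shows "(\<Sum>x<3 * m. f (part_label k m x)) = (\<Sum>p<6. (if p < 3 then real k else real (m - k)) * f p)"
proof -
  have "(\<Sum>x<3 * m. f (part_label k m x)) = (\<Sum>p<6. \<Sum>x \<in> {x \<in> {..<3 * m}. part_label k m x = p}. f (part_label k m x))"
    by (rule sum.group[symmetric]) (auto simp: part_label_def)
  also have "\<dots> = (\<Sum>p<6. real (card {x \<in> {..<3 * m}. part_label k m x = p}) * f p)"
    by (intro sum.cong refl) simp
  also have "\<dots> = (\<Sum>p<6. (if p < 3 then real k else real (m - k)) * f p)"
    using card_part_label_fiber[OF assms] by (intro sum.cong refl) simp
  finally show ?thesis .
qed

definition pattern_blowup :: "nat \<Rightarrow> nat \<Rightarrow> nat set set" where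
  "pattern_blowup k m = blowup part_pattern (part_label k m) (3 * m)"

lemma pattern_blowup_rgraph: "is_rgraph 3 (3 * m) (pattern_blowup k m)"
  unfolding pattern_blowup_def by (rule blowup_rgraph)

lemma pattern_blowup_K4_free: "family_free {K3 4} (3 * m) (pattern_blowup k m)"
  unfolding pattern_blowup_def
  using symmetric_part_pattern part_pattern_K4_free by (rule blowup_K4_free)

lemma sum3_part_pattern:
  assumes "k \<le> m"
  shows "(\<Sum>x<3 * m. \<Sum>y<3 * m. \<Sum>z<3 * m.
      of_bool (part_pattern (part_label k m x) (part_label k m y) (part_label k m z))) = 15 * real m ^ 3"
proof -
  let ?w = "\<lambda>p. if p < 3 then real k else real (m - k)"
  let ?l = "part_label k m"
  have "(\<Sum>x<3 * m. \<Sum>y<3 * m. \<Sum>z<3 * m. of_bool (part_pattern (?l x) (?l y) (?l z)))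
      = (\<Sum>x<3 * m. \<Sum>y<3 * m. \<Sum>r<6. ?w r * of_bool (part_pattern (?l x) (?l y) r))"
    by (intro sum.cong[OF refl]) (rule sum_part_label[OF assms])
  also have "\<dots> = (\<Sum>x<3 * m. \<Sum>q<6. ?w q * (\<Sum>r<6. ?w r * of_bool (part_pattern (?l x) q r)))"
    by (intro sum.cong[OF refl]) (rule sum_part_label[OF assms])
  also have "\<dots> = (\<Sum>p<6. ?w p * (\<Sum>q<6. ?w q * (\<Sum>r<6. ?w r * of_bool (part_pattern p q r))))"
    by (rule sum_part_label[OF assms])
  also have "\<dots> = 15 * (real k + real (m - k)) ^ 3"
    by (rule part_pattern_weighted_triples)
  finally show ?thesis
    using assms by simp
qed

lemma sum_codegree_square_part_pattern:
  assumes "k \<le> m"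
  shows "(\<Sum>x<3 * m. \<Sum>y<3 * m. (\<Sum>z<3 * m.
      of_bool (part_pattern (part_label k m x) (part_label k m y) (part_label k m z)))\<^sup>2)
    = 27 * real m ^ 4 - 12 * real k ^ 2 * real (m - k) ^ 2"
proof -
  let ?w = "\<lambda>p. if p < 3 then real k else real (m - k)"
  let ?l = "part_label k m"
  have "(\<Sum>x<3 * m. \<Sum>y<3 * m. (\<Sum>z<3 * m. of_bool (part_pattern (?l x) (?l y) (?l z)))\<^sup>2)
      = (\<Sum>x<3 * m. \<Sum>y<3 * m. (\<Sum>r<6. ?w r * of_bool (part_pattern (?l x) (?l y) r))\<^sup>2)"
    by (intro sum.cong[OF refl] arg_cong[where f = "\<lambda>t. t\<^sup>2"]) (rule sum_part_label[OF assms])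
  also have "\<dots> = (\<Sum>x<3 * m. \<Sum>q<6. ?w q * (\<Sum>r<6. ?w r * of_bool (part_pattern (?l x) q r))\<^sup>2)"
    by (intro sum.cong[OF refl]) (rule sum_part_label[OF assms])
  also have "\<dots> = (\<Sum>p<6. ?w p * (\<Sum>q<6. ?w q * (\<Sum>r<6. ?w r * of_bool (part_pattern p q r))\<^sup>2))"
    by (rule sum_part_label[OF assms])
  also have "\<dots> = 27 * (real k + real (m - k)) ^ 4 - 12 * real k ^ 2 * real (m - k) ^ 2"
    by (rule part_pattern_weighted_codegrees)
  finally show ?thesis
    using assms by simp
qed

lemma card_pattern_blowup_ge:
  assumes "k \<le> m"
  shows "15 * real m ^ 3 - 27 * real m ^ 2 \<le> 6 * real (card (pattern_blowup k m))"
proof -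
  let ?l = "part_label k m"
  have "15 * real m ^ 3 - 3 * real (3 * m) ^ 2
      \<le> (\<Sum>x<3 * m. \<Sum>y<3 * m. \<Sum>z<3 * m. of_bool (distinct [x, y, z] \<and> part_pattern (?l x) (?l y) (?l z)))"
    using sum3_drop_degenerate[where n = "3 * m" and Q = "\<lambda>x y z. part_pattern (?l x) (?l y) (?l z)"]
      sum3_part_pattern[OF assms] by simp
  also have "\<dots> = triple_count (pattern_blowup k m) (3 * m)"
    unfolding triple_count_def pattern_blowup_def
    by (intro sum.cong refl) (simp add: mem_blowup[OF symmetric_part_pattern])
  also have "\<dots> = 6 * real (card (pattern_blowup k m))"
    by (rule triple_count_eq[OF pattern_blowup_rgraph])
  finally show ?thesis
    by (simp add: power2_eq_square)
qed

lemma codegree_square_sum_pattern_blowup: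
  assumes "k \<le> m"
  shows "\<bar>codegree_square_sum (pattern_blowup k m) (3 * m)
      - (27 * real m ^ 4 - 12 * real k ^ 2 * real (m - k) ^ 2)\<bar> \<le> 162 * real m ^ 3"
proof -
  let ?l = "part_label k m"
  have "codegree_square_sum (pattern_blowup k m) (3 * m)
      = (\<Sum>x<3 * m. \<Sum>y<3 * m. (\<Sum>z<3 * m. of_bool (distinct [x, y, z] \<and> part_pattern (?l x) (?l y) (?l z)))\<^sup>2)"
    unfolding codegree_square_sum_def pattern_blowup_def
    by (intro sum.cong refl) (simp add: mem_blowup[OF symmetric_part_pattern])
  moreover have "6 * real (3 * m) ^ 3 = 162 * real m ^ 3"
    by (simp add: power3_eq_cube)
  ultimately show ?thesis
    using sum_codegree_square_drop_degenerate[where n = "3 * m" and Q = "\<lambda>x y z. part_pattern (?l x) (?l y) (?l z)"]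
    unfolding sum_codegree_square_part_pattern[OF assms] by simp
qed

section \<open>Non-stability\<close>

lemma is_rgraph_relabel:
  assumes \<sigma>: "bij_betw \<sigma> {..<n} {..<n}" and H: "is_rgraph r n H"
  shows "is_rgraph r n (image \<sigma> ` H)"
  unfolding is_rgraph_def
proof
  fix e' assume "e' \<in> image \<sigma> ` H"
  then obtain e where e: "e \<in> H" "e' = \<sigma> ` e"
    by blast
  then have "e \<subseteq> {..<n}" "card e = r"
    using H by (auto simp: is_rgraph_def)
  moreover have "inj_on \<sigma> {..<n}"
    using \<sigma> by (simp add: bij_betw_def)
  ultimately show "e' \<subseteq> {..<n} \<and> card e' = r"
    using e(2) bij_betw_imp_surj_on[OF \<sigma>] by (auto simp: card_image inj_on_subset)
qed

definition edit_close :: "real \<Rightarrow> nat \<Rightarrow> nat set set \<Rightarrow> nat set set \<Rightarrow> bool" where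
  "edit_close \<delta> n G H \<longleftrightarrow> (\<exists>\<sigma>. bij_betw \<sigma> {..<n} {..<n} \<and>
     real (card ((G - image \<sigma> ` H) \<union> (image \<sigma> ` H - G))) \<le> \<delta> * real (card G))"

lemma codegree_square_sum_close:
  assumes G: "is_rgraph 3 n G" and H: "is_rgraph 3 n H" and "edit_close \<delta> n G H" "0 \<le> \<delta>"
  shows "\<bar>codegree_square_sum G n - codegree_square_sum H n\<bar> \<le> 2 * \<delta> * real n ^ 4"
proof -
  obtain \<sigma> where \<sigma>: "bij_betw \<sigma> {..<n} {..<n}"
    and close: "real (card ((G - image \<sigma> ` H) \<union> (image \<sigma> ` H - G))) \<le> \<delta> * real (card G)"
    using \<open>edit_close \<delta> n G H\<close> by (auto simp: edit_close_def)
  let ?K = "image \<sigma> ` H"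
  let ?D = "(G - ?K) \<union> (?K - G)"
  have "is_rgraph 3 n ?D"
    using G is_rgraph_relabel[OF \<sigma> H] by (auto simp: is_rgraph_def)
  have "\<bar>codegree_square_sum G n - codegree_square_sum H n\<bar> = \<bar>codegree_square_sum G n - codegree_square_sum ?K n\<bar>"
    by (simp add: codegree_square_sum_relabel[OF \<sigma> H])
  also have "\<dots> \<le> 2 * real n * (6 * real (card ?D))"
    using codegree_square_sum_diff_le[of G n ?K] triple_count_eq[OF \<open>is_rgraph 3 n ?D\<close>] by simp
  also have "\<dots> \<le> 2 * real n * (6 * (\<delta> * (real n ^ 3 / 6)))"
  proof -
    have "real (card ?D) \<le> \<delta> * (real n ^ 3 / 6)"
      using close mult_left_mono[OF card_le_cube_div_6[OF G] \<open>0 \<le> \<delta>\<close>] by linarith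
    then show ?thesis
      by (intro mult_left_mono) auto
  qed
  also have "\<dots> = 2 * \<delta> * real n ^ 4"
    by (simp add: power_eq_if)
  finally show ?thesis .
qed

lemma exists_far_from_all:
  fixes q h :: "nat \<Rightarrow> real"
  assumes sep: "\<And>j j'. j < j' \<Longrightarrow> j' \<le> t \<Longrightarrow> D \<le> q j - q j'"
  shows "\<exists>j\<le>t. \<forall>i\<in>{1..t}. D / 2 \<le> \<bar>q j - h i\<bar>"
proof (rule ccontr)
  assume "\<not> ?thesis"
  then obtain f where f: "\<And>j. j \<le> t \<Longrightarrow> f j \<in> {1..t} \<and> \<bar>q j - h (f j)\<bar> < D / 2"
    by (metis not_le)
  have "f ` {..t} \<subseteq> {1..t}"
    using f by blast
  then have "card (f ` {..t}) < card {..t}"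
    using card_mono[of "{1..t}" "f ` {..t}"] by simp
  then obtain j j' where "j \<le> t" "j' \<le> t" "j < j'" "f j = f j'"
    using pigeonhole[of f "{..t}"] unfolding inj_on_def by (metis atMost_iff linorder_neqE_nat)
  then have "\<bar>q j - h (f j)\<bar> < D / 2" "\<bar>q j' - h (f j)\<bar> < D / 2"
    using f[of j] f[of j'] by simp_all
  then have "\<bar>q j - q j'\<bar> < D"
    by (simp only: abs_less_iff) linarith
  then show False
    using sep[OF \<open>j < j'\<close> \<open>j' \<le> t\<close>] by simp
qed

lemma product_square_gap:
  fixes a b s R :: real
  assumes "0 \<le> a" "a + 1 \<le> b" "a + b + 3 \<le> s"
  shows "(a * R * (s * R - a * R))\<^sup>2 + 9 * R ^ 4 \<le> (b * R * (s * R - b * R))\<^sup>2"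
proof -
  define A where "A = a * (s - a)"
  define B where "B = b * (s - b)"
  have "B - A = (b - a) * (s - a - b)"
    by (simp add: A_def B_def algebra_simps)
  also have "\<dots> \<ge> 1 * 3"
    using assms by (intro mult_mono) auto
  finally have "3 \<le> B - A"
    by simp
  moreover have "0 \<le> A"
    using assms by (simp add: A_def)
  ultimately have "3 * 3 \<le> (B - A) * (B + A)"
    by (intro mult_mono) auto
  then have "A\<^sup>2 + 9 \<le> B\<^sup>2"
    by (simp add: power2_eq_square algebra_simps)
  then have "A\<^sup>2 * R ^ 4 + 9 * R ^ 4 \<le> B\<^sup>2 * R ^ 4"
    using mult_right_mono[of "A\<^sup>2 + 9" "B\<^sup>2" "R ^ 4"] by (simp add: algebra_simps)
  moreover have "(a * R * (s * R - a * R))\<^sup>2 = A\<^sup>2 * R ^ 4" "(b * R * (s * R - b * R))\<^sup>2 = B\<^sup>2 * R ^ 4"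
    by (simp_all add: A_def B_def power2_eq_square power4_eq_xxxx algebra_simps)
  ultimately show ?thesis
    by simp
qed

lemma exists_far_pattern_blowup:
  fixes t r :: nat and h :: "nat \<Rightarrow> real"
  defines "m \<equiv> 2 * (t + 1) * r"
  shows "\<exists>j\<le>t. \<forall>i\<in>{1..t}.
    54 * real r ^ 4 - 162 * real m ^ 3 \<le> \<bar>codegree_square_sum (pattern_blowup (j * r) m) (3 * m) - h i\<bar>"
proof -
  define q where "q j = 27 * real m ^ 4 - 12 * real (j * r) ^ 2 * real (m - j * r) ^ 2" for j
  have le_m: "j * r \<le> m" if "j \<le> t" for j
    unfolding m_def by (rule mult_le_mono1) (use that in simp)
  have "108 * real r ^ 4 \<le> q j - q j'" if "j < j'" "j' \<le> t" for j j'
  proof -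
    have "real (j * r) = real j * real r" "real (j' * r) = real j' * real r"
      "real (m - j * r) = real (2 * (t + 1)) * real r - real j * real r"
      "real (m - j' * r) = real (2 * (t + 1)) * real r - real j' * real r"
      using le_m[of j] le_m[of j'] that by (simp_all add: of_nat_diff m_def algebra_simps)
    then show ?thesis
      using product_square_gap[of "real j" "real j'" "real (2 * (t + 1))" "real r"] that
      by (simp add: q_def power_mult_distrib)
  qed
  then obtain j where "j \<le> t" and far: "\<forall>i\<in>{1..t}. 54 * real r ^ 4 \<le> \<bar>q j - h i\<bar>"
    using exists_far_from_all[of t "108 * real r ^ 4" q h] by auto
  have "\<bar>codegree_square_sum (pattern_blowup (j * r) m) (3 * m) - q j\<bar> \<le> 162 * real m ^ 3"
    unfolding q_def using codegree_square_sum_pattern_blowup[OF le_m[OF \<open>j \<le> t\<close>]] by simp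
  then show ?thesis
    using \<open>j \<le> t\<close> far by (intro exI[of _ j]) fastforce
qed

lemma five_ninths_margin:
  fixes \<eta> X :: real
  assumes "0 < \<eta>" "\<eta> \<le> 1" "1 \<le> X" "4 < \<eta> * X"
  shows "(1 - \<eta>) * ((5 / 9 + \<eta> / 4) * (27 * X ^ 3 / 6)) < (15 * X ^ 3 - 27 * X ^ 2) / 6"
proof -
  have "(1 - \<eta>) * ((5 / 9 + \<eta> / 4) * (27 * X ^ 3 / 6))
      = (15 * X ^ 3 - 33 / 4 * \<eta> * X ^ 3) / 6 - 9 / 8 * \<eta>\<^sup>2 * X ^ 3"
    by (simp add: field_simps power2_eq_square)
  also have "\<dots> \<le> (15 * X ^ 3 - 33 / 4 * \<eta> * X ^ 3) / 6"
  proof -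
    have "0 \<le> 9 / 8 * \<eta>\<^sup>2 * X ^ 3"
      using \<open>1 \<le> X\<close> by simp
    then show ?thesis
      by linarith
  qed
  also have "\<dots> < (15 * X ^ 3 - 27 * X ^ 2) / 6"
  proof -
    have "27 < 33 / 4 * (\<eta> * X)"
      using \<open>4 < \<eta> * X\<close> by linarith
    then have "27 * X ^ 2 < 33 / 4 * (\<eta> * X) * X ^ 2"
      using \<open>1 \<le> X\<close> by (intro mult_strict_right_mono) auto
    also have "\<dots> = 33 / 4 * \<eta> * X ^ 3"
      by (simp add: power2_eq_square power3_eq_cube)
    finally show ?thesis
      by (intro divide_strict_right_mono) linarith+
  qed
  finally show ?thesis .
qed

lemma pattern_blowup_near_extremal:
  assumes lim: "ex_density 3 {K3 4} \<longlonglongrightarrow> 5 / 9" and "\<epsilon> > 0"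
  shows "\<forall>\<^sub>F m in sequentially. \<forall>k\<le>m.
    (1 - \<epsilon>) * real (ex_num 3 {K3 4} (3 * m)) < real (card (pattern_blowup k m))"
proof -
  define \<eta> where "\<eta> = min \<epsilon> 1"
  have \<eta>: "0 < \<eta>" "\<eta> \<le> \<epsilon>" "\<eta> \<le> 1"
    using \<open>\<epsilon> > 0\<close> by (auto simp: \<eta>_def)
  obtain N where N: "\<And>n. N \<le> n \<Longrightarrow> ex_density 3 {K3 4} n < 5 / 9 + \<eta> / 4"
    using order_tendstoD(2)[OF lim, of "5 / 9 + \<eta> / 4"] \<eta>(1) by (auto simp: eventually_sequentially)
  show ?thesis
  proof (rule eventually_sequentiallyI[of "N + nat \<lceil>4 / \<eta>\<rceil> + 1"], intro allI impI)
    fix m k assume m: "N + nat \<lceil>4 / \<eta>\<rceil> + 1 \<le> m" and "k \<le> m"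
    define X where "X = real m"
    have "4 / \<eta> < X"
      using m by (simp add: X_def) linarith
    then have "4 < \<eta> * X"
      using \<eta>(1) by (simp add: field_simps)
    have "X \<ge> 1"
      using m by (simp add: X_def)
    have "real (ex_num 3 {K3 4} (3 * m)) = ex_density 3 {K3 4} (3 * m) * real (3 * m choose 3)"
      using m by (simp add: ex_density_def)
    also have "\<dots> \<le> (5 / 9 + \<eta> / 4) * (real (3 * m) ^ 3 / 6)"
      using N[of "3 * m"] m choose_3_le_cube_div_6[of "3 * m"] \<eta>(1)
      by (intro mult_mono) auto
    finally have ex: "real (ex_num 3 {K3 4} (3 * m)) \<le> (5 / 9 + \<eta> / 4) * (27 * X ^ 3 / 6)"
      by (simp add: X_def power_mult_distrib)
    have "(1 - \<epsilon>) * real (ex_num 3 {K3 4} (3 * m)) \<le> (1 - \<eta>) * ((5 / 9 + \<eta> / 4) * (27 * X ^ 3 / 6))"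
      using \<eta> ex by (intro mult_mono) auto
    also have "\<dots> < (15 * X ^ 3 - 27 * X ^ 2) / 6"
      using \<eta>(1,3) \<open>X \<ge> 1\<close> \<open>4 < \<eta> * X\<close> by (rule five_ninths_margin)
    also have "\<dots> \<le> real (card (pattern_blowup k m))"
      using card_pattern_blowup_ge[OF \<open>k \<le> m\<close>] by (simp add: X_def)
    finally show "(1 - \<epsilon>) * real (ex_num 3 {K3 4} (3 * m)) < real (card (pattern_blowup k m))" .
  qed
qed

lemma pattern_blowup_far_from_templates:
  fixes t r :: nat and K :: "nat \<Rightarrow> nat set set"
  defines "s \<equiv> 2 * (t + 1)"
  defines "m \<equiv> s * r"
  assumes "4 * s ^ 3 < r" and K: "\<forall>i\<in>{1..t}. is_rgraph 3 (3 * m) (K i)"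
  shows "\<exists>j\<le>t. \<forall>i\<in>{1..t}. \<not> edit_close (1 / real (3 * s) ^ 4) (3 * m) (pattern_blowup (j * r) m) (K i)"
proof -
  let ?\<delta> = "1 / real (3 * s) ^ 4"
  obtain j where "j \<le> t" and far: "\<forall>i\<in>{1..t}. 54 * real r ^ 4 - 162 * real m ^ 3
      \<le> \<bar>codegree_square_sum (pattern_blowup (j * r) m) (3 * m) - codegree_square_sum (K i) (3 * m)\<bar>"
    using exists_far_pattern_blowup[of t r "\<lambda>i. codegree_square_sum (K i) (3 * m)"]
    unfolding m_def s_def by blast
  have "\<not> edit_close ?\<delta> (3 * m) (pattern_blowup (j * r) m) (K i)" if "i \<in> {1..t}" for i
  proof
    assume "edit_close ?\<delta> (3 * m) (pattern_blowup (j * r) m) (K i)"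
    then have "\<bar>codegree_square_sum (pattern_blowup (j * r) m) (3 * m) - codegree_square_sum (K i) (3 * m)\<bar>
        \<le> 2 * ?\<delta> * real (3 * m) ^ 4"
      using K that by (intro codegree_square_sum_close[OF pattern_blowup_rgraph]) auto
    also have "\<dots> = 2 * real r ^ 4"
    proof -
      have "real (3 * m) ^ 4 = real (3 * s) ^ 4 * real r ^ 4"
        by (simp add: m_def power_mult_distrib)
      moreover have "real (3 * s) ^ 4 > 0"
        by (simp add: s_def)
      ultimately show ?thesis
        by simp
    qed
    finally have "54 * real r ^ 4 - 162 * (real s * real r) ^ 3 \<le> 2 * real r ^ 4"
      using far that by (fastforce simp: m_def)
    then have "52 * real r * real r ^ 3 \<le> 162 * real s ^ 3 * real r ^ 3"
      by (simp add: power_mult_distrib power4_eq_xxxx power3_eq_cube)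
    moreover have "0 < real r ^ 3"
      using \<open>4 * s ^ 3 < r\<close> by simp
    ultimately have "52 * real r \<le> 162 * real s ^ 3"
      by (rule mult_right_le_imp_le)
    moreover have "4 * real s ^ 3 < real r"
      using \<open>4 * s ^ 3 < r\<close> by (metis of_nat_less_iff of_nat_mult of_nat_numeral of_nat_power)
    ultimately show False
      by linarith
  qed
  then show ?thesis
    using \<open>j \<le> t\<close> by blast
qed

lemma not_t_stable_K4:
  assumes lim: "ex_density 3 {K3 4} \<longlonglongrightarrow> 5 / 9"
  shows "\<not> t_stable 3 {K3 4} t"
proof
  assume "t_stable 3 {K3 4} t"
  then obtain m0 and Hs :: "nat \<Rightarrow> nat \<Rightarrow> nat set set" where
    templates: "\<forall>m\<ge>m0. \<forall>i\<in>{1..t}. is_rgraph 3 m (Hs m i)"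
    and stable: "\<forall>\<delta>::real. \<delta> > 0 \<longrightarrow> (\<exists>\<epsilon>::real. \<epsilon> > 0 \<and> (\<exists>n0::nat. \<forall>n\<ge>n0. \<forall>H.
        is_rgraph 3 n H \<and> family_free {K3 4} n H \<and>
        real (card H) > (1 - \<epsilon>) * real (ex_num 3 {K3 4} n) \<longrightarrow> (\<exists>i\<in>{1..t}. edit_close \<delta> n H (Hs n i))))"
    unfolding t_stable_def edit_close_def by blast
  define s where "s = 2 * (t + 1)"
  have "1 / real (3 * s) ^ 4 > 0"
    by (simp add: s_def)
  then obtain \<epsilon> n0 where "\<epsilon> > 0" and close: "\<forall>n\<ge>n0. \<forall>H.
      is_rgraph 3 n H \<and> family_free {K3 4} n H \<and> real (card H) > (1 - \<epsilon>) * real (ex_num 3 {K3 4} n)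
      \<longrightarrow> (\<exists>i\<in>{1..t}. edit_close (1 / real (3 * s) ^ 4) n H (Hs n i))"
    using stable by blast
  obtain M where near: "\<And>m k. M \<le> m \<Longrightarrow> k \<le> m \<Longrightarrow>
      (1 - \<epsilon>) * real (ex_num 3 {K3 4} (3 * m)) < real (card (pattern_blowup k m))"
    using pattern_blowup_near_extremal[OF lim \<open>\<epsilon> > 0\<close>] by (auto simp: eventually_sequentially)
  define r where "r = M + n0 + m0 + 4 * s ^ 3 + 1"
  define m where "m = s * r"
  have "m0 \<le> 3 * m" "n0 \<le> 3 * m" "M \<le> m"
    by (simp_all add: m_def r_def s_def)
  then obtain j where "j \<le> t"
    and far: "\<forall>i\<in>{1..t}. \<not> edit_close (1 / real (3 * s) ^ 4) (3 * m) (pattern_blowup (j * r) m) (Hs (3 * m) i)"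
    using pattern_blowup_far_from_templates[of t r "Hs (3 * m)"] templates
    unfolding m_def r_def s_def by fastforce
  have "j * r \<le> m"
    unfolding m_def s_def using \<open>j \<le> t\<close> by (intro mult_le_mono1) simp
  then show False
    using close near[OF \<open>M \<le> m\<close>] far \<open>n0 \<le> 3 * m\<close> pattern_blowup_rgraph pattern_blowup_K4_free
    by blast
qed

theorem proposition1p10:
  assumes "\<forall>l::nat\<ge>4. turan_density 3 {K3 l} = 1 - (2 / (real l - 1))^2"
  shows "stability_number 3 {K3 4} = \<infinity>"
proof -
  have "turan_density 3 {K3 4} = 5 / 9"
    using assms by (simp add: power2_eq_square)
  moreover have "ex_density 3 {K3 4} \<longlonglongrightarrow> turan_density 3 {K3 4}"
    by (rule ex_density_tendsto) (auto simp: K3_def intro: exI[of _ "{0, 1, 2}"])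
  ultimately have "ex_density 3 {K3 4} \<longlonglongrightarrow> 5 / 9"
    by (simp only:)
  then show ?thesis
    using not_t_stable_K4 by (simp add: stability_number_def)
qed

end
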